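(* For every integer $n > 3$, there exists a permutation $p$ of $\{1,2,\ldots,n\}$ such that the number of distinct patterns contained in $p$ is greater than $\dfrac{2^{\,n - 2\sqrt{n}}}{\sqrt{n}}$.
   Context: Two sequences of distinct integers $q = q_1 q_2 \cdots q_k$ and $r = r_1 r_2 \cdots r_k$ of the same length are identically ordered if for all $i,j$, $q_i < q_j \iff r_i < r_j$. For a permutation $p = p_1 p_2 \cdots p_n$, a subsequence is $p_{i_1} p_{i_2}\cdots p_{i_k}$ with $i_1 < i_2 < \cdots < i_k$. A permutation $p$ contains a pattern $q$ (a permutation of $\{1,\ldots,k\}$) if some subsequence of $p$ of length $k$ is identically ordered with $q$. The number of distinct patterns contained in $p$ is the number of permutations $q$ (of any length $k \ge 0$ or $k\ge 1$) contained in $p$. *)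

theory Defs
  imports Complex_Main
begin

text \<open>Permutations of {1..n} are represented as lists (one-line notation).\<close>

definition is_perm_of :: "nat \<Rightarrow> nat list \<Rightarrow> bool" where
  "is_perm_of n p \<longleftrightarrow> distinct p \<and> set p = {1..n}"

definition ident_ordered :: "nat list \<Rightarrow> nat list \<Rightarrow> bool" where
  "ident_ordered q r \<longleftrightarrow> length q = length r \<and>
     (\<forall>i < length q. \<forall>j < length q. (q ! i < q ! j \<longleftrightarrow> r ! i < r ! j))"

definition contains :: "nat list \<Rightarrow> nat list \<Rightarrow> bool" where
  "contains p q \<longleftrightarrow> is_perm_of (length q) q \<and>
     (\<exists>I. I \<subseteq> {..<length p} \<and> card I = length q \<and> ident_ordered (nths p I) q)"

definition patterns :: "nat list \<Rightarrow> nat list set" where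
  "patterns p = {q. q \<noteq> [] \<and> contains p q}"

end

theory Submission
  imports Defs
begin

text \<open>Put a increasing entries, the levels, at the front and cut the remaining n - a positions
  into blocks of length a + 1. The last entry of each block is a column marker exceeding
  everything else, and the r-th entry of the q-th block lies between levels r - 1 and r.
  Any subsequence keeping all levels and all markers determines which other entries it kept:
  the number of markers before an entry gives its block q, the number of levels below it gives
  its offset r. Hence the subsets of the roughly n - n/(a+1) remaining entries give pairwise
  distinct patterns, and a = floor (sqrt n) + 1 leaves at least n - 2 sqrt n of them.\<close>

section \<open>Order types of subsequences\<close>

lemma ident_ordered_sym: "ident_ordered x y \<Longrightarrow> ident_ordered y x"
  unfolding ident_ordered_def by auto

lemma ident_ordered_trans: "ident_ordered x y \<Longrightarrow> ident_ordered y z \<Longrightarrow> ident_ordered x z"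
  unfolding ident_ordered_def by auto

lemma nths_conv_map_nth: "nths xs I = map ((!) xs) (nths [0..<length xs] I)"
  by (metis map_nth nths_map)

lemma ident_ordered_nths:
  assumes "ident_ordered x y"
  shows "ident_ordered (nths x I) (nths y I)"
proof -
  have len: "length x = length y"
    and ord: "\<And>i j. i < length x \<Longrightarrow> j < length x \<Longrightarrow> x ! i < x ! j \<longleftrightarrow> y ! i < y ! j"
    using assms unfolding ident_ordered_def by auto
  have "set (nths [0..<length x] I) \<subseteq> {..<length x}"
    using set_nths_subset by fastforce
  then show ?thesis
    unfolding ident_ordered_def nths_conv_map_nth[of x] nths_conv_map_nth[of y] len
    using ord len by (auto simp: subset_iff)
qed

lemma contains_ident_ordered_iff:
  assumes "ident_ordered p r"
  shows "contains p q \<longleftrightarrow> contains r q"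
proof -
  have "length p = length r" using assms unfolding ident_ordered_def by simp
  moreover have "ident_ordered (nths p I) q \<longleftrightarrow> ident_ordered (nths r I) q" for I
    using ident_ordered_nths[OF assms] ident_ordered_nths[OF ident_ordered_sym[OF assms]]
    by (meson ident_ordered_trans)
  ultimately show ?thesis unfolding contains_def by simp
qed

lemma patterns_ident_ordered: "ident_ordered p r \<Longrightarrow> patterns p = patterns r"
  unfolding patterns_def using contains_ident_ordered_iff by blast

lemma finite_patterns: "finite (patterns p)"
proof (rule finite_subset)
  show "patterns p \<subseteq> {q. set q \<subseteq> {..length p} \<and> length q \<le> length p}"
  proof
    fix q assume "q \<in> patterns p"
    then obtain I where q: "is_perm_of (length q) q" and I: "I \<subseteq> {..<length p}" "card I = length q"
      unfolding patterns_def contains_def by blast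
    have "length q \<le> length p" using card_mono[OF _ I(1)] I(2) by simp
    with q show "q \<in> {q. set q \<subseteq> {..length p} \<and> length q \<le> length p}"
      unfolding is_perm_of_def by auto
  qed
qed (rule finite_lists_length_le, simp)

definition standardize :: "nat list \<Rightarrow> nat list" where
  "standardize xs = map (\<lambda>v. card {w \<in> set xs. w \<le> v}) xs"

lemma rank_less_rank_iff:
  fixes A :: "nat set"
  assumes "finite A" "v \<in> A" "v' \<in> A"
  shows "card {w \<in> A. w \<le> v} < card {w \<in> A. w \<le> v'} \<longleftrightarrow> v < v'"
proof
  assume "v < v'"
  then have "{w \<in> A. w \<le> v} \<subset> {w \<in> A. w \<le> v'}" using assms(3) by force
  then show "card {w \<in> A. w \<le> v} < card {w \<in> A. w \<le> v'}"
    using assms(1) by (simp add: psubset_card_mono)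
next
  assume "card {w \<in> A. w \<le> v} < card {w \<in> A. w \<le> v'}"
  moreover have "card {w \<in> A. w \<le> v'} \<le> card {w \<in> A. w \<le> v}" if "v' \<le> v"
    using that assms(1) by (intro card_mono) auto
  ultimately show "v < v'" by linarith
qed

lemma length_standardize [simp]: "length (standardize xs) = length xs"
  by (simp add: standardize_def)

lemma ident_ordered_standardize: "ident_ordered (standardize xs) xs"
  unfolding ident_ordered_def standardize_def
  by (simp add: rank_less_rank_iff)

lemma is_perm_of_standardize:
  assumes "distinct xs"
  shows "is_perm_of (length xs) (standardize xs)"
proof -
  have "distinct (standardize xs)"
    unfolding distinct_conv_nth
  proof (intro allI impI)
    fix i j assume "i < length (standardize xs)" "j < length (standardize xs)" "i \<noteq> j"
    moreover from this have "xs ! i \<noteq> xs ! j"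
      using assms by (simp add: nth_eq_iff_index_eq)
    ultimately show "standardize xs ! i \<noteq> standardize xs ! j"
      using ident_ordered_standardize[of xs] unfolding ident_ordered_def
      by (metis less_irrefl linorder_neq_iff)
  qed
  moreover have "set (standardize xs) \<subseteq> {1..length xs}"
  proof
    fix r assume "r \<in> set (standardize xs)"
    then obtain v where v: "v \<in> set xs" and r: "r = card {w \<in> set xs. w \<le> v}"
      by (auto simp: standardize_def)
    have "0 < r" unfolding r using v by (subst card_gt_0_iff) auto
    moreover have "r \<le> card (set xs)" unfolding r by (rule card_mono) auto
    ultimately show "r \<in> {1..length xs}" using assms by (simp add: distinct_card)
  qed
  ultimately show ?thesis
    unfolding is_perm_of_def by (simp add: card_subset_eq distinct_card)
qed

lemma contains_standardize_nths:
  assumes "distinct p" "I \<subseteq> {..<length p}"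
  shows "contains p (standardize (nths p I))"
proof -
  have "{i. i < length p \<and> i \<in> I} = I" using assms(2) by auto
  then have "length (nths p I) = card I" by (simp add: length_nths)
  then show ?thesis
    unfolding contains_def
    using assms is_perm_of_standardize[of "nths p I"] ident_ordered_standardize ident_ordered_sym
    by auto
qed

lemma card_patterns_ge_two_pow:
  fixes I :: "'a set \<Rightarrow> nat set"
  assumes "distinct p" "finite F"
    and "\<And>S. S \<subseteq> F \<Longrightarrow> I S \<subseteq> {..<length p} \<and> I S \<noteq> {}"
    and "\<And>S S'. S \<subseteq> F \<Longrightarrow> S' \<subseteq> F \<Longrightarrow> ident_ordered (nths p (I S)) (nths p (I S')) \<Longrightarrow> S = S'"
  shows "2 ^ card F \<le> card (patterns p)"
proof -
  define \<Phi> where "\<Phi> S = standardize (nths p (I S))" for S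
  have "\<Phi> S \<in> patterns p" if S: "S \<subseteq> F" for S
  proof -
    obtain i where "i \<in> I S" "i < length p" using assms(3)[OF S] by fastforce
    then have "p ! i \<in> set (nths p (I S))" by (auto simp: set_nths)
    then have "nths p (I S) \<noteq> []" by auto
    then have "\<Phi> S \<noteq> []" unfolding \<Phi>_def by (metis length_0_conv length_standardize)
    then show ?thesis
      unfolding patterns_def \<Phi>_def using contains_standardize_nths assms(1,3) S by blast
  qed
  moreover have "inj_on \<Phi> (Pow F)"
  proof (rule inj_onI)
    fix S S' assume "S \<in> Pow F" "S' \<in> Pow F" and eq: "\<Phi> S = \<Phi> S'"
    have "ident_ordered (nths p (I S)) (\<Phi> S')"
      using eq ident_ordered_sym[OF ident_ordered_standardize] unfolding \<Phi>_def by metis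
    then have "ident_ordered (nths p (I S)) (nths p (I S'))"
      using ident_ordered_trans ident_ordered_standardize unfolding \<Phi>_def by blast
    then show "S = S'" using assms(4) \<open>S \<in> Pow F\<close> \<open>S' \<in> Pow F\<close> by blast
  qed
  ultimately have "card (Pow F) \<le> card (patterns p)"
    by (intro card_inj_on_le finite_patterns) auto
  then show ?thesis using assms(2) by (simp add: card_Pow)
qed

section \<open>The grid construction\<close>

lemma card_less_mod_Suc_eq: "card {i. i < m \<and> i mod Suc a = a} = m div Suc a"
proof (induction m)
  case (Suc m)
  have "{i. i < Suc m \<and> i mod Suc a = a} =
      {i. i < m \<and> i mod Suc a = a} \<union> (if m mod Suc a = a then {m} else {})"
    by (auto simp: less_Suc_eq)
  moreover have "Suc m div Suc a = m div Suc a + (if m mod Suc a = a then 1 else 0)"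
    by (simp add: div_Suc mod_Suc)
  ultimately show ?case using Suc by (auto simp: card_insert_if)
qed simp

lemma card_less_nth_sorted_wrt:
  fixes xs :: "nat list"
  assumes sorted: "sorted_wrt (<) xs" and j: "j < length xs"
    and closed: "\<And>y. y < xs ! j \<Longrightarrow> Q y \<Longrightarrow> y \<in> set xs"
  shows "card {k. k < j \<and> Q (xs ! k)} = card {y. y < xs ! j \<and> Q y}"
proof -
  have mono: "xs ! k < xs ! k' \<longleftrightarrow> k < k'" if "k < length xs" "k' < length xs" for k k'
    using sorted that by (metis linorder_neqE_nat order.asym sorted_wrt_nth_less)
  have "nth xs ` {k. k < j \<and> Q (xs ! k)} = {y. y < xs ! j \<and> Q y}"
  proof (intro set_eqI iffI)
    fix y assume "y \<in> {y. y < xs ! j \<and> Q y}"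
    then obtain k where "k < length xs" "xs ! k = y" "Q y" "y < xs ! j"
      using closed by (auto simp: in_set_conv_nth)
    then show "y \<in> nth xs ` {k. k < j \<and> Q (xs ! k)}" using mono j by auto
  qed (use mono j in auto)
  moreover have "inj_on (nth xs) {k. k < j \<and> Q (xs ! k)}"
    using mono j by (intro inj_onI) (metis less_trans mem_Collect_eq not_less_iff_gr_or_eq)
  ultimately show ?thesis by (metis card_image)
qed

definition grid_level :: "nat \<Rightarrow> nat \<Rightarrow> nat" where
  "grid_level n g = 2 * (g + 1) * n"

text \<open>Write i = q (a + 1) + r. As q < n, a non-marker (r < a) gets the odd value 2(rn + q) + 1
  strictly between the levels 2rn and 2(r + 1)n, while a marker (r = a) gets 4n^2 + i, above
  every level.\<close>

definition grid_cell :: "nat \<Rightarrow> nat \<Rightarrow> nat \<Rightarrow> nat" where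
  "grid_cell n a i =
     (if i mod Suc a = a then 4 * n * n + i else 2 * ((i mod Suc a) * n + i div Suc a) + 1)"

definition grid_seq :: "nat \<Rightarrow> nat \<Rightarrow> nat list \<Rightarrow> nat list" where
  "grid_seq n a is = map (grid_level n) [0..<a] @ map (grid_cell n a) is"

lemma nths_grid_seq_upt:
  "nths (grid_seq n a [0..<m]) ({..<a} \<union> (+) a ` J) = grid_seq n a (nths [0..<m] J)"
proof -
  have "{j. j + a \<in> {..<a} \<union> (+) a ` J} = J" by force
  then show ?thesis
    unfolding grid_seq_def nths_append nths_map by (simp add: nths_all)
qed

lemma grid_seq_nth_level: "g < a \<Longrightarrow> grid_seq n a is ! g = grid_level n g"
  by (simp add: grid_seq_def nth_append)

lemma grid_seq_nth_cell: "j < length is \<Longrightarrow> grid_seq n a is ! (a + j) = grid_cell n a (is ! j)"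
  by (simp add: grid_seq_def nth_append)

lemma even_grid_level: "even (grid_level n g)"
  by (simp add: grid_level_def)

lemma odd_grid_cell: "i mod Suc a \<noteq> a \<Longrightarrow> odd (grid_cell n a i)"
  by (simp add: grid_cell_def)

lemma grid_level_le_top_level: "g < a \<Longrightarrow> grid_level n g \<le> grid_level n (a - 1)"
  unfolding grid_level_def by (intro mult_le_mono1) simp

definition is_marker :: "nat \<Rightarrow> nat list \<Rightarrow> nat \<Rightarrow> bool" where
  "is_marker a u t \<longleftrightarrow> a \<le> t \<and> u ! (a - 1) < u ! t"

definition decode :: "nat \<Rightarrow> nat list \<Rightarrow> (nat \<times> nat) set" where
  "decode a u =
     {(card {t'. a \<le> t' \<and> t' < t \<and> is_marker a u t'}, card {g. g < a \<and> u ! g < u ! t}) | t.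
        a \<le> t \<and> t < length u \<and> \<not> is_marker a u t}"

lemma decode_ident_ordered:
  assumes "ident_ordered u v"
  shows "decode a u = decode a v"
proof -
  have len: "length u = length v"
    and ord: "\<And>i j. i < length u \<Longrightarrow> j < length u \<Longrightarrow> u ! i < u ! j \<longleftrightarrow> v ! i < v ! j"
    using assms unfolding ident_ordered_def by auto
  have marker: "is_marker a u t \<longleftrightarrow> is_marker a v t" if "t < length u" for t
    unfolding is_marker_def using ord that by (metis diff_le_self le_less_trans)
  have "{t'. a \<le> t' \<and> t' < t \<and> is_marker a u t'} = {t'. a \<le> t' \<and> t' < t \<and> is_marker a v t'}"
    "{g. g < a \<and> u ! g < u ! t} = {g. g < a \<and> v ! g < v ! t}"
    if "a \<le> t" "t < length u" for t
    using marker ord that by auto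
  then show ?thesis unfolding decode_def using len marker by (metis (no_types, lifting))
qed

context
  fixes n a :: nat
  assumes a_pos: "0 < a" and a_le_n: "a \<le> n"
begin

lemma grid_level_less_cell_iff:
  assumes "i < n" "i mod Suc a \<noteq> a"
  shows "grid_level n g < grid_cell n a i \<longleftrightarrow> g < i mod Suc a"
proof -
  define r q where "r = i mod Suc a" and "q = i div Suc a"
  have "q < n" unfolding q_def using assms(1) by (meson div_le_dividend le_less_trans)
  have "2 * (g + 1) * n < 2 * (r * n + q) + 1 \<longleftrightarrow> g < r"
  proof
    assume "g < r"
    then have "(g + 1) * n \<le> r * n" by (intro mult_le_mono1) simp
    then show "2 * (g + 1) * n < 2 * (r * n + q) + 1" by simp
  next
    assume less: "2 * (g + 1) * n < 2 * (r * n + q) + 1"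
    show "g < r"
    proof (rule ccontr)
      assume "\<not> g < r"
      then have "(r + 1) * n \<le> (g + 1) * n" by (intro mult_le_mono1) simp
      moreover have "2 * (r * n + q) + 1 < 2 * ((r + 1) * n)"
        using \<open>q < n\<close> by (simp add: algebra_simps)
      moreover have "2 * ((g + 1) * n) < 2 * (r * n + q) + 1" using less by (simp only: mult.assoc)
      ultimately show False by linarith
    qed
  qed
  then show ?thesis using assms(2) unfolding grid_level_def grid_cell_def r_def q_def by simp
qed

lemma grid_cell_less_top_level:
  assumes "i < n" "i mod Suc a \<noteq> a"
  shows "grid_cell n a i < grid_level n (a - 1)"
proof -
  have "i mod Suc a < a" using assms(2) by (metis less_Suc_eq mod_less_divisor zero_less_Suc)
  then have "\<not> grid_level n (a - 1) < grid_cell n a i"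
    using grid_level_less_cell_iff[OF assms] by simp
  moreover have "grid_level n (a - 1) \<noteq> grid_cell n a i"
    using even_grid_level odd_grid_cell[OF assms(2)] by metis
  ultimately show ?thesis by simp
qed

lemma top_level_less_grid_cell:
  assumes "i mod Suc a = a"
  shows "grid_level n (a - 1) < grid_cell n a i"
proof -
  have "grid_level n (a - 1) = 2 * a * n" unfolding grid_level_def using a_pos by simp
  also have "\<dots> < 4 * n * n" using a_pos a_le_n by simp
  finally show ?thesis using assms unfolding grid_cell_def by simp
qed

lemma inj_on_grid_cell: "inj_on (grid_cell n a) {..<n}"
proof (rule inj_onI)
  fix i j assume "i \<in> {..<n}" "j \<in> {..<n}" and eq: "grid_cell n a i = grid_cell n a j"
  then have "i < n" "j < n" by auto
  then have q: "i div Suc a < n" "j div Suc a < n" by (meson div_le_dividend le_less_trans)+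
  consider "i mod Suc a = a" "j mod Suc a = a" | "i mod Suc a \<noteq> a" "j mod Suc a \<noteq> a"
    | "(i mod Suc a = a) \<noteq> (j mod Suc a = a)" by blast
  then show "i = j"
  proof cases
    case 1
    then show ?thesis using eq unfolding grid_cell_def by simp
  next
    case 2
    then have code: "(i mod Suc a) * n + i div Suc a = (j mod Suc a) * n + j div Suc a"
      using eq unfolding grid_cell_def by simp
    have "i mod Suc a = ((i mod Suc a) * n + i div Suc a) div n"
      "j mod Suc a = ((j mod Suc a) * n + j div Suc a) div n"
      "i div Suc a = ((i mod Suc a) * n + i div Suc a) mod n"
      "j div Suc a = ((j mod Suc a) * n + j div Suc a) mod n"
      using q by simp_all
    then have "i mod Suc a = j mod Suc a" "i div Suc a = j div Suc a"
      unfolding code by simp_all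
    then show ?thesis by (metis div_mult_mod_eq)
  next
    case 3
    then show ?thesis using eq grid_cell_less_top_level top_level_less_grid_cell \<open>i < n\<close> \<open>j < n\<close>
      by (metis order.asym)
  qed
qed

lemma distinct_grid_seq:
  assumes "distinct is" "set is \<subseteq> {..<n}"
  shows "distinct (grid_seq n a is)"
proof -
  have "distinct (map (grid_level n) [0..<a])"
    using a_pos a_le_n by (auto simp: distinct_map inj_on_def grid_level_def)
  moreover have "distinct (map (grid_cell n a) is)"
    using assms inj_on_subset[OF inj_on_grid_cell] by (simp add: distinct_map)
  moreover have "grid_level n g \<noteq> grid_cell n a i" if "g < a" "i < n" for g i
  proof (cases "i mod Suc a = a")
    case True
    then show ?thesis
      using top_level_less_grid_cell[OF True] grid_level_le_top_level[OF \<open>g < a\<close>, of n] by simp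
  next
    case False
    then show ?thesis using even_grid_level odd_grid_cell by metis
  qed
  ultimately show ?thesis using assms(2) unfolding grid_seq_def by auto
qed

lemma is_marker_grid_seq:
  assumes "set is \<subseteq> {..<n}" "j < length is"
  shows "is_marker a (grid_seq n a is) (a + j) \<longleftrightarrow> is ! j mod Suc a = a"
proof -
  have "is ! j < n" using assms nth_mem by blast
  moreover have "grid_seq n a is ! (a - 1) = grid_level n (a - 1)"
    using a_pos by (simp add: grid_seq_nth_level)
  moreover note grid_cell_less_top_level[of "is ! j"] top_level_less_grid_cell[of "is ! j"]
  ultimately show ?thesis
    unfolding is_marker_def grid_seq_nth_cell[OF assms(2)] by fastforce
qed

lemma card_levels_below_grid_seq:
  assumes "set is \<subseteq> {..<n}" "j < length is" "is ! j mod Suc a \<noteq> a"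
  shows "card {g. g < a \<and> grid_seq n a is ! g < grid_seq n a is ! (a + j)} = is ! j mod Suc a"
proof -
  have "is ! j < n" using assms nth_mem by blast
  have "is ! j mod Suc a < a"
    using assms(3) by (metis less_Suc_eq mod_less_divisor zero_less_Suc)
  have "grid_seq n a is ! g < grid_seq n a is ! (a + j) \<longleftrightarrow> g < is ! j mod Suc a" if "g < a" for g
    using grid_level_less_cell_iff[OF \<open>is ! j < n\<close> assms(3)] that
    by (simp add: grid_seq_nth_level grid_seq_nth_cell[OF assms(2)])
  with \<open>is ! j mod Suc a < a\<close>
  have "{g. g < a \<and> grid_seq n a is ! g < grid_seq n a is ! (a + j)} = {..<is ! j mod Suc a}"
    by auto
  then show ?thesis by simp
qed

lemma card_markers_before_grid_seq:
  assumes sorted: "sorted_wrt (<) is" and bound: "set is \<subseteq> {..<n}" and j: "j < length is"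
    and closed: "\<And>i. i < is ! j \<Longrightarrow> i mod Suc a = a \<Longrightarrow> i \<in> set is"
  shows "card {t. a \<le> t \<and> t < a + j \<and> is_marker a (grid_seq n a is) t} = is ! j div Suc a"
proof -
  have marker: "is_marker a (grid_seq n a is) (a + k) \<longleftrightarrow> is ! k mod Suc a = a" if "k < j" for k
    using is_marker_grid_seq[OF bound] that j by simp
  have "{t. a \<le> t \<and> t < a + j \<and> is_marker a (grid_seq n a is) t} =
      (+) a ` {k. k < j \<and> is ! k mod Suc a = a}"
  proof (intro set_eqI iffI)
    fix t assume t: "t \<in> {t. a \<le> t \<and> t < a + j \<and> is_marker a (grid_seq n a is) t}"
    then obtain k where "t = a + k" using le_Suc_ex by blast
    moreover from this t have "k < j" by simp
    ultimately show "t \<in> (+) a ` {k. k < j \<and> is ! k mod Suc a = a}" using t marker by blast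
  next
    fix t assume "t \<in> (+) a ` {k. k < j \<and> is ! k mod Suc a = a}"
    with marker show "t \<in> {t. a \<le> t \<and> t < a + j \<and> is_marker a (grid_seq n a is) t}" by auto
  qed
  then have "card {t. a \<le> t \<and> t < a + j \<and> is_marker a (grid_seq n a is) t} =
      card {k. k < j \<and> is ! k mod Suc a = a}"
    by (simp add: card_image)
  also have "\<dots> = card {i. i < is ! j \<and> i mod Suc a = a}"
    by (rule card_less_nth_sorted_wrt[OF sorted j closed])
  also have "\<dots> = is ! j div Suc a" by (rule card_less_mod_Suc_eq)
  finally show ?thesis .
qed

lemma decode_grid_seq:
  assumes sorted: "sorted_wrt (<) is" and bound: "set is \<subseteq> {..<n}"
    and closed: "\<And>i i'. i \<in> set is \<Longrightarrow> i' < i \<Longrightarrow> i' mod Suc a = a \<Longrightarrow> i' \<in> set is"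
  shows "decode a (grid_seq n a is) =
    (\<lambda>i. (i div Suc a, i mod Suc a)) ` {i \<in> set is. i mod Suc a \<noteq> a}"
proof -
  let ?u = "grid_seq n a is"
  have entry: "(card {t'. a \<le> t' \<and> t' < a + j \<and> is_marker a ?u t'},
      card {g. g < a \<and> ?u ! g < ?u ! (a + j)}) = (is ! j div Suc a, is ! j mod Suc a)"
    if j: "j < length is" "is ! j mod Suc a \<noteq> a" for j
  proof -
    have "card {t'. a \<le> t' \<and> t' < a + j \<and> is_marker a ?u t'} = is ! j div Suc a"
      using closed[OF nth_mem[OF j(1)]] by (rule card_markers_before_grid_seq[OF sorted bound j(1)])
    then show ?thesis using card_levels_below_grid_seq[OF bound j] by simp
  qed
  have "decode a ?u = {(is ! j div Suc a, is ! j mod Suc a) | j. j < length is \<and> is ! j mod Suc a \<noteq> a}"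
  proof (intro set_eqI iffI)
    fix z assume "z \<in> decode a ?u"
    then obtain t where t: "a \<le> t" "t < length ?u" "\<not> is_marker a ?u t"
      and z: "z = (card {t'. a \<le> t' \<and> t' < t \<and> is_marker a ?u t'}, card {g. g < a \<and> ?u ! g < ?u ! t})"
      unfolding decode_def by blast
    then obtain j where tj: "t = a + j" using le_Suc_ex by blast
    with t have j: "j < length is" by (simp add: grid_seq_def)
    with t tj have "is ! j mod Suc a \<noteq> a" using is_marker_grid_seq[OF bound] by simp
    with j z tj entry have "z = (is ! j div Suc a, is ! j mod Suc a)" by simp
    with j \<open>is ! j mod Suc a \<noteq> a\<close>
    show "z \<in> {(is ! j div Suc a, is ! j mod Suc a) | j. j < length is \<and> is ! j mod Suc a \<noteq> a}"
      by blast
  next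
    fix z assume "z \<in> {(is ! j div Suc a, is ! j mod Suc a) | j. j < length is \<and> is ! j mod Suc a \<noteq> a}"
    then obtain j where j: "j < length is" "is ! j mod Suc a \<noteq> a"
      and z: "z = (is ! j div Suc a, is ! j mod Suc a)"
      by blast
    have "a + j < length ?u" using j by (simp add: grid_seq_def)
    moreover have "\<not> is_marker a ?u (a + j)" using is_marker_grid_seq[OF bound] j by simp
    moreover have "z = (card {t'. a \<le> t' \<and> t' < a + j \<and> is_marker a ?u t'},
        card {g. g < a \<and> ?u ! g < ?u ! (a + j)})"
      using entry[OF j] z by simp
    ultimately show "z \<in> decode a ?u" unfolding decode_def by (intro CollectI exI[of _ "a + j"]) simp
  qed
  moreover have "{i \<in> set is. i mod Suc a \<noteq> a} = nth is ` {j. j < length is \<and> is ! j mod Suc a \<noteq> a}"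
    by (auto simp: in_set_conv_nth)
  ultimately show ?thesis by (auto simp: image_image)
qed

lemma decode_grid_seq_subsequence:
  assumes "T \<subseteq> {i. i < n - a \<and> i mod Suc a \<noteq> a}"
  shows "decode a (nths (grid_seq n a [0..<n - a])
      ({..<a} \<union> (+) a ` ({i. i < n - a \<and> i mod Suc a = a} \<union> T))) =
    (\<lambda>i. (i div Suc a, i mod Suc a)) ` T"
proof -
  define H where "H = {i. i < n - a \<and> i mod Suc a = a}"
  let ?is = "nths [0..<n - a] (H \<union> T)"
  have set_is: "set ?is = H \<union> T" using assms unfolding set_nths H_def by force
  have "sorted_wrt (<) ?is" by (simp add: strict_sorted_iff sorted_nths)
  moreover have "set ?is \<subseteq> {..<n}" using assms unfolding set_is unfolding H_def by auto
  moreover have "i' \<in> set ?is" if "i \<in> set ?is" "i' < i" "i' mod Suc a = a" for i i'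
    using that assms unfolding set_is unfolding H_def by auto
  ultimately have "decode a (grid_seq n a ?is) =
      (\<lambda>i. (i div Suc a, i mod Suc a)) ` {i \<in> set ?is. i mod Suc a \<noteq> a}"
    by (rule decode_grid_seq)
  also have "{i \<in> set ?is. i mod Suc a \<noteq> a} = T"
    using assms unfolding set_is unfolding H_def by auto
  finally show ?thesis unfolding H_def nths_grid_seq_upt .
qed

lemma exists_perm_card_patterns_ge:
  "\<exists>p. is_perm_of n p \<and> 2 ^ ((n - a) - (n - a) div Suc a) \<le> card (patterns p)"
proof -
  define m where "m = n - a"
  define R where "R = grid_seq n a [0..<m]"
  define H where "H = {i. i < m \<and> i mod Suc a = a}"
  define F where "F = {i. i < m \<and> i mod Suc a \<noteq> a}"
  define I where "I T = {..<a} \<union> (+) a ` (H \<union> T)" for T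
  let ?code = "\<lambda>i. (i div Suc a, i mod Suc a)"
  have len: "length R = n" unfolding R_def grid_seq_def m_def using a_le_n by simp
  have "distinct R" unfolding R_def m_def by (rule distinct_grid_seq) auto
  have decode_R: "decode a (nths R (I T)) = ?code ` T" if "T \<subseteq> F" for T
    using decode_grid_seq_subsequence that unfolding R_def I_def H_def F_def m_def by blast
  have "2 ^ card F \<le> card (patterns R)"
  proof (rule card_patterns_ge_two_pow[of R F I])
    show "I S \<subseteq> {..<length R} \<and> I S \<noteq> {}" if "S \<subseteq> F" for S
      using that a_pos a_le_n unfolding I_def H_def F_def len m_def by auto
    show "S = S'" if "S \<subseteq> F" "S' \<subseteq> F" "ident_ordered (nths R (I S)) (nths R (I S'))" for S S'
    proof -
      have "?code ` S = ?code ` S'"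
        using decode_ident_ordered[OF that(3), of a] decode_R[OF that(1)] decode_R[OF that(2)] by simp
      moreover have "inj ?code" by (rule injI) (metis div_mult_mod_eq prod.inject)
      ultimately show ?thesis by (simp add: inj_image_eq_iff)
    qed
  qed (use \<open>distinct R\<close> F_def in auto)
  moreover have "card F = m - m div Suc a"
  proof -
    have "F = {..<m} - H" "H \<subseteq> {..<m}" unfolding F_def H_def by auto
    then have "card F = m - card H" by (simp add: card_Diff_subset finite_subset)
    then show ?thesis unfolding H_def card_less_mod_Suc_eq .
  qed
  moreover have "is_perm_of n (standardize R)"
    using is_perm_of_standardize[OF \<open>distinct R\<close>] len by simp
  moreover have "patterns (standardize R) = patterns R"
    by (rule patterns_ident_ordered[OF ident_ordered_standardize])
  ultimately show ?thesis unfolding m_def by metis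
qed

end

section \<open>Choosing the number of levels\<close>

lemma sqrt_grid_free_count:
  fixes n :: nat
  assumes "2 \<le> n"
  defines "a \<equiv> nat \<lfloor>sqrt (real n)\<rfloor> + 1"
  shows "a \<le> n" and "real n - 2 * sqrt (real n) \<le> real ((n - a) - (n - a) div Suc a)"
proof -
  define s where "s = nat \<lfloor>sqrt (real n)\<rfloor>"
  have s_le: "real s \<le> sqrt (real n)" unfolding s_def by simp
  have s_gt: "sqrt (real n) < real s + 1" unfolding s_def by linarith
  have "1 \<le> sqrt (real n)" using assms(1) by simp
  then have "1 \<le> s" using s_gt by linarith
  have "real (s * s) \<le> real n"
    using mult_mono[OF s_le s_le] by simp
  then have sq_le: "s * s \<le> n" by linarith
  have "real n < real ((s + 1) * (s + 1))"
    using mult_strict_mono[OF s_gt s_gt] by (simp add: algebra_simps)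
  then have sq_gt: "n < (s + 1) * (s + 1)" by linarith
  have "s + 1 \<le> n"
  proof (cases "s = 1")
    case False
    then have "2 * s \<le> s * s" using \<open>1 \<le> s\<close> by (intro mult_le_mono1) simp
    then show ?thesis using sq_le \<open>1 \<le> s\<close> by linarith
  qed (use assms(1) in simp)
  then show "a \<le> n" unfolding a_def s_def by simp
  have "(s + 1) * (s + 1) = s * Suc (s + 1) + 1" by (simp add: algebra_simps)
  then have "n - a < s * Suc a" unfolding a_def s_def[symmetric] using sq_gt assms(1) by linarith
  then have "(n - a) div Suc a < s" by (simp add: div_less_iff_less_mult)
  then have "n - 2 * s \<le> (n - a) - (n - a) div Suc a" unfolding a_def s_def[symmetric] by linarith
  then show "real n - 2 * sqrt (real n) \<le> real ((n - a) - (n - a) div Suc a)"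
    using s_le by linarith
qed

theorem theorem1:
  fixes n :: nat
  assumes "n > 3"
  shows "\<exists>p. is_perm_of n p \<and>
           real (card (patterns p)) > 2 powr (real n - 2 * sqrt (real n)) / sqrt (real n)"
proof -
  define a where "a = nat \<lfloor>sqrt (real n)\<rfloor> + 1"
  define c where "c = (n - a) - (n - a) div Suc a"
  have "2 \<le> n" using assms by simp
  note free_count = sqrt_grid_free_count[OF this, folded a_def c_def]
  have "0 < a" unfolding a_def by simp
  then obtain p where p: "is_perm_of n p" "2 ^ c \<le> card (patterns p)"
    using exists_perm_card_patterns_ge[OF _ free_count(1)] unfolding c_def by blast
  have "1 < sqrt (real n)" using assms by simp
  then have "2 powr (real n - 2 * sqrt (real n)) / sqrt (real n) < 2 powr (real n - 2 * sqrt (real n))"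
    by (simp add: divide_less_eq)
  also have "\<dots> \<le> 2 powr (real c)" using free_count(2) by simp
  also have "\<dots> = real (2 ^ c)" by (simp add: powr_realpow)
  also have "\<dots> \<le> real (card (patterns p))" using p(2) by linarith
  finally show ?thesis using p(1) by blast
qed

end
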